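(* Let $q \in Q$ and suppose $R_q$ contains a single simple path. Then the polytope $U(\mathcal{C}_q) = \{ x \in [0,1]^{|N|} : \sum_{j \in S} x_j \ge 1 \ \forall S \in \mathcal{C}_q\}$ is integral.
   Context: Let $G=(N,A)$ be a finite undirected graph with edge lengths $\ell_e > 0$, and let $d>0$ be the travel range, with $\ell_e \le d$ for every edge. A path is a sequence $r=(v_0,v_1,\dots,v_m)$, $m\ge 1$, of nodes in which consecutive nodes are joined by an edge (nodes may repeat); $r$ is simple if its nodes are distinct. For $x \in \{0,1\}^N$ ($x_j = 1$ meaning a charging station at node $j$), path $r$ is repeatedly traversable under $x$ if, letting $W=(v_0,\dots,v_m,v_{m-1},\dots,v_0)$ be the round trip along $r$, at least one node of $r$ has $x_j=1$ and, in the infinite periodic repetition of $W$, the distance travelled between any two consecutive visits to nodes with a station is at most $d$. Let $Q$ be a finite set of demands; each $q\in Q$ has a finite nonempty set $R_q$ of paths. For each $q \in Q$ and $r \in R_q$, $\mathcal{D}_{q,r}\subseteq 2^N$ is a family of node sets such that for every $x \in \{0,1\}^N$: $r$ is repeatedly traversable under $x$ if and only if $\sum_{j\in S} x_j \ge 1$ for all $S \in \mathcal{D}_{q,r}$. Define $\mathcal{C}_q = \{ \bigcup_{r \in R_q} S_r : S_r \in \mathcal{D}_{q,r} \text{ for each } r \in R_q\}$. *)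

theory Defs
  imports "HOL-Analysis.Analysis"
begin

text \<open>Nodes are the elements of a finite type 'n (so N = UNIV); edges of the undirected
graph are 2-element node sets; a station vector is x :: real^'n with entries in {0,1}.\<close>

definition is_path :: "'n set set \<Rightarrow> 'n list \<Rightarrow> bool" where
  "is_path A r \<longleftrightarrow> length r \<ge> 2 \<and> (\<forall>k. Suc k < length r \<longrightarrow> {r ! k, r ! Suc k} \<in> A)"

definition simple_node_path :: "'n list \<Rightarrow> bool" where
  "simple_node_path r \<longleftrightarrow> distinct r"

text \<open>Round trip (v0,...,vm,v_{m-1},...,v0) as a closed walk; its cyclic node sequence
(v0,...,vm,v_{m-1},...,v1) of length 2m, and its infinite periodic repetition.\<close>
definition round_cycle :: "'n list \<Rightarrow> 'n list" where
  "round_cycle r = r @ tl (butlast (rev r))"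

definition periodic_walk :: "'n list \<Rightarrow> nat \<Rightarrow> 'n" where
  "periodic_walk r k = round_cycle r ! (k mod length (round_cycle r))"

definition walk_dist :: "('n set \<Rightarrow> real) \<Rightarrow> 'n list \<Rightarrow> nat \<Rightarrow> nat \<Rightarrow> real" where
  "walk_dist len r i j = (\<Sum>k\<in>{i..<j}. len {periodic_walk r k, periodic_walk r (Suc k)})"

definition rep_traversable ::
  "('n set \<Rightarrow> real) \<Rightarrow> real \<Rightarrow> 'n list \<Rightarrow> real^'n \<Rightarrow> bool" where
  "rep_traversable len d r x \<longleftrightarrow>
     (\<exists>j\<in>set r. x $ j = 1) \<and>
     (\<forall>i j. i < j \<and> x $ (periodic_walk r i) = 1 \<and> x $ (periodic_walk r j) = 1 \<and>
            (\<forall>k. i < k \<and> k < j \<longrightarrow> x $ (periodic_walk r k) \<noteq> 1)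
            \<longrightarrow> walk_dist len r i j \<le> d)"

definition binary_vec :: "real^'n \<Rightarrow> bool" where
  "binary_vec x \<longleftrightarrow> (\<forall>j. x $ j \<in> {0, 1})"

definition cover_family :: "'r set \<Rightarrow> ('r \<Rightarrow> 'n set set) \<Rightarrow> 'n set set" where
  "cover_family R D = {\<Union>r\<in>R. S r | S. \<forall>r\<in>R. S r \<in> D r}"

definition U_poly :: "'n set set \<Rightarrow> (real^'n) set" where
  "U_poly C = {x. (\<forall>j. 0 \<le> x $ j \<and> x $ j \<le> 1) \<and> (\<forall>S\<in>C. (\<Sum>j\<in>S. x $ j) \<ge> 1)}"

definition integral_polytope :: "(real^'n) set \<Rightarrow> bool" where
  "integral_polytope P \<longleftrightarrow> (\<forall>v. v extreme_point_of P \<longrightarrow> (\<forall>j. v $ j \<in> \<int>))"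

end

theory Submission
  imports Defs
begin

(*
  Let C be the family of node sets describing repeated traversability of the single simple
  path r. Every S in C contains a subpath G of r (possibly empty) that itself contains a member
  of C: with stations everywhere outside S the round trip along r has a gap longer than d
  between consecutive stations, the nodes strictly inside that gap form a subpath G of r
  contained in S (the position in r changes by at most one per step of the round trip), and
  with stations everywhere outside G the same gap remains, so G contains a member of C.

  Hence at a point v of U(C) every tight constraint, after discarding coordinates where v
  vanishes, is an interval constraint along r. If v had a fractional coordinate, there would
  be a direction w that fixes all 0/1 coordinates and all tight constraints: a unit vector
  off r, or on r the argument for total unimodularity of interval matrices. Then v +- e w
  lies in U(C) for small e, so v is not a vertex.
*)

lemma not_extreme_point_if_perturbable:
  fixes v w :: "'a::real_vector"
  assumes perturb: "\<forall>\<^sub>F e in at (0::real). v + e *\<^sub>R w \<in> P" and "w \<noteq> 0"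
  shows "\<not> v extreme_point_of P"
proof -
  obtain \<delta> where "\<delta> > 0" and \<delta>: "\<And>e. e \<noteq> 0 \<Longrightarrow> \<bar>e\<bar> < \<delta> \<Longrightarrow> v + e *\<^sub>R w \<in> P"
    using perturb unfolding eventually_at by (auto simp: dist_real_def)
  define e where "e = \<delta> / 2"
  have "e > 0" "e < \<delta>" using \<open>\<delta> > 0\<close> by (auto simp: e_def)
  have in_P: "v - e *\<^sub>R w \<in> P" "v + e *\<^sub>R w \<in> P"
    using \<delta>[of "-e"] \<delta>[of e] \<open>e > 0\<close> \<open>e < \<delta>\<close> by auto
  have "(v + e *\<^sub>R w) - (v - e *\<^sub>R w) = 2 *\<^sub>R (e *\<^sub>R w)" by (simp add: scaleR_2 del: scaleR_scaleR)
  moreover have "2 *\<^sub>R (e *\<^sub>R w) \<noteq> 0" using \<open>e > 0\<close> \<open>w \<noteq> 0\<close> by simp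
  ultimately have "v - e *\<^sub>R w \<noteq> v + e *\<^sub>R w" by (metis diff_self)
  moreover have "midpoint (v - e *\<^sub>R w) (v + e *\<^sub>R w) = v"
    by (simp add: midpoint_eq_iff)
  ultimately have "v \<in> open_segment (v - e *\<^sub>R w) (v + e *\<^sub>R w)"
    using midpoint_in_open_segment by metis
  then show ?thesis using in_P by (auto simp: extreme_point_of_def)
qed

lemma U_poly_perturbation:
  fixes v w :: "real^'n::finite"
  assumes v: "v \<in> U_poly C"
    and w_fixed: "\<And>j. v $ j \<in> {0, 1} \<Longrightarrow> w $ j = 0"
    and w_tight: "\<And>S. S \<in> C \<Longrightarrow> (\<Sum>j\<in>S. v $ j) = 1 \<Longrightarrow> (\<Sum>j\<in>S. w $ j) = 0"
  shows "\<forall>\<^sub>F e in at 0. v + e *\<^sub>R w \<in> U_poly C"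
proof -
  have sum_eq: "(\<Sum>j\<in>S. (v + e *\<^sub>R w) $ j) = (\<Sum>j\<in>S. v $ j) + e * (\<Sum>j\<in>S. w $ j)" for S e
    by (simp add: sum.distrib sum_distrib_left)
  have "\<forall>\<^sub>F e in at 0. 0 \<le> (v + e *\<^sub>R w) $ j \<and> (v + e *\<^sub>R w) $ j \<le> 1" for j
  proof (cases "v $ j \<in> {0, 1}")
    case True
    then show ?thesis using w_fixed[OF True] by auto
  next
    case False
    with v have "0 < v $ j" "v $ j < 1" by (auto simp: U_poly_def order.order_iff_strict)
    moreover have lim: "((\<lambda>e. v $ j + e * w $ j) \<longlongrightarrow> v $ j) (at 0)"
      by (auto intro!: tendsto_eq_intros)
    ultimately show ?thesis
      using eventually_conj[OF order_tendstoD(1)[OF lim, of 0] order_tendstoD(2)[OF lim, of 1]]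
      by (auto elim!: eventually_mono)
  qed
  moreover have "\<forall>\<^sub>F e in at 0. 1 \<le> (\<Sum>j\<in>S. (v + e *\<^sub>R w) $ j)" if "S \<in> C" for S
  proof (cases "(\<Sum>j\<in>S. v $ j) = 1")
    case True
    then show ?thesis using w_tight[OF that True] unfolding sum_eq by simp
  next
    case False
    with v that have "1 < (\<Sum>j\<in>S. v $ j)" by (auto simp: U_poly_def)
    moreover have "((\<lambda>e. (\<Sum>j\<in>S. v $ j) + e * (\<Sum>j\<in>S. w $ j)) \<longlongrightarrow> (\<Sum>j\<in>S. v $ j)) (at 0)"
      by (auto intro!: tendsto_eq_intros)
    ultimately show ?thesis
      unfolding sum_eq by (auto elim!: eventually_mono[OF order_tendstoD(1), of _ _ _ 1])
  qed
  then have "\<forall>\<^sub>F e in at 0. \<forall>S\<in>C. 1 \<le> (\<Sum>j\<in>S. (v + e *\<^sub>R w) $ j)"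
    by (intro eventually_ball_finite) auto
  ultimately show ?thesis
    unfolding U_poly_def by (auto elim!: eventually_mono[OF eventually_conj[OF eventually_all_finite]])
qed

definition round_trip_index :: "nat \<Rightarrow> nat \<Rightarrow> nat" where
  "round_trip_index n p = (let k = p mod (2 * n - 2) in if k < n then k else 2 * n - 2 - k)"

lemma nth_round_cycle:
  assumes "2 \<le> length r" and "k < 2 * length r - 2"
  shows "round_cycle r ! k = r ! (if k < length r then k else 2 * length r - 2 - k)"
proof (cases "k < length r")
  case True
  then show ?thesis by (simp add: round_cycle_def nth_append)
next
  case False
  let ?n = "length r"
  have "round_cycle r ! k = tl (butlast (rev r)) ! (k - ?n)"
    using False by (simp add: round_cycle_def nth_append)
  also have "\<dots> = rev (tl r) ! Suc (k - ?n)"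
    using False assms by (simp add: nth_tl)
  also have "\<dots> = tl r ! (?n - 2 - Suc (k - ?n))"
    using False assms by (simp add: rev_nth)
  also have "\<dots> = r ! Suc (?n - 2 - Suc (k - ?n))"
    using False assms by (simp add: nth_tl)
  also have "Suc (?n - 2 - Suc (k - ?n)) = 2 * ?n - 2 - k"
    using False assms by simp
  finally show ?thesis using False by simp
qed

lemma length_round_cycle: "2 \<le> length r \<Longrightarrow> length (round_cycle r) = 2 * length r - 2"
  by (simp add: round_cycle_def)

lemma periodic_walk_eq_nth:
  assumes "2 \<le> length r"
  shows "periodic_walk r p = r ! round_trip_index (length r) p"
proof -
  have "p mod (2 * length r - 2) < 2 * length r - 2" using assms by simp
  from nth_round_cycle[OF assms this] show ?thesis
    unfolding periodic_walk_def length_round_cycle[OF assms] round_trip_index_def Let_def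
    by simp
qed

lemma round_trip_index_less:
  assumes "2 \<le> n"
  shows "round_trip_index n p < n"
proof -
  have "p mod (2 * n - 2) < 2 * n - 2" using assms by simp
  then show ?thesis using assms by (auto simp: round_trip_index_def Let_def)
qed

lemma round_trip_index_Suc:
  assumes "2 \<le> n"
  shows "round_trip_index n (Suc p) \<le> round_trip_index n p + 1"
    and "round_trip_index n p \<le> round_trip_index n (Suc p) + 1"
proof -
  define L where "L = 2 * n - 2"
  define k where "k = p mod L"
  have "k < L" using assms by (simp add: L_def k_def)
  have idx_p: "round_trip_index n p = (if k < n then k else L - k)"
    by (simp add: round_trip_index_def Let_def L_def k_def)
  consider "Suc k = L" "Suc p mod L = 0" | "Suc k < L" "Suc p mod L = Suc k"
    using \<open>k < L\<close> unfolding k_def by (metis mod_Suc Suc_lessI)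
  then have "round_trip_index n (Suc p) \<le> round_trip_index n p + 1 \<and>
             round_trip_index n p \<le> round_trip_index n (Suc p) + 1"
  proof cases
    case 1
    then have "round_trip_index n (Suc p) = 0"
      by (simp add: round_trip_index_def L_def)
    then show ?thesis unfolding idx_p using 1(1) assms by (auto simp: L_def)
  next
    case 2
    then have "round_trip_index n (Suc p) = (if Suc k < n then Suc k else L - Suc k)"
      by (simp add: round_trip_index_def Let_def L_def)
    then show ?thesis unfolding idx_p using 2(1) assms by (auto simp: L_def)
  qed
  then show "round_trip_index n (Suc p) \<le> round_trip_index n p + 1"
    and "round_trip_index n p \<le> round_trip_index n (Suc p) + 1" by auto
qed

lemma image_atLeastAtMost_unit_steps:
  fixes f :: "nat \<Rightarrow> nat"
  assumes up: "\<And>p. f (Suc p) \<le> f p + 1" and down: "\<And>p. f p \<le> f (Suc p) + 1" and "a \<le> b"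
  shows "\<exists>lo hi. lo \<le> hi \<and> f ` {a..b} = {lo..hi}"
  using \<open>a \<le> b\<close>
proof (induction b)
  case 0
  then show ?case by (intro exI[of _ "f 0"] exI[of _ "f 0"]) auto
next
  case (Suc b)
  show ?case
  proof (cases "a = Suc b")
    case True
    then show ?thesis by (intro exI[of _ "f a"] exI[of _ "f a"]) auto
  next
    case False
    then have "a \<le> b" using Suc.prems by simp
    then obtain lo hi where "lo \<le> hi" and image_ab: "f ` {a..b} = {lo..hi}"
      using Suc.IH by blast
    have "f b \<in> {lo..hi}" using \<open>a \<le> b\<close> by (simp flip: image_ab)
    have "f ` {a..Suc b} = insert (f (Suc b)) {lo..hi}"
      using \<open>a \<le> b\<close> image_ab by (simp add: atLeastAtMostSuc_conv)
    also have "\<dots> = {min lo (f (Suc b))..max hi (f (Suc b))}"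
      using \<open>f b \<in> {lo..hi}\<close> up[of b] down[of b]
      unfolding set_eq_iff atLeastAtMost_iff insert_iff min_def max_def
      by (intro allI) (auto; linarith)
    finally show ?thesis using \<open>lo \<le> hi\<close> by (metis le_max_iff_disj min.coboundedI1)
  qed
qed

definition subpath_nodes :: "'a list \<Rightarrow> 'a set set" where
  "subpath_nodes r = {(!) r ` {lo..hi} | lo hi. lo \<le> hi \<and> hi < length r}"

lemma set_in_subpath_nodes:
  assumes "r \<noteq> []"
  shows "set r \<in> subpath_nodes r"
proof -
  have "set r = (!) r ` {0..<Suc (length r - 1)}" using assms by (simp add: nth_image)
  then have "set r = (!) r ` {0..length r - 1}" by (simp only: atLeastLessThanSuc_atLeastAtMost)
  moreover have "length r - 1 < length r" using assms by simp
  ultimately show ?thesis unfolding subpath_nodes_def by blast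
qed
lemma subpath_nodes_subset_set: "G \<in> subpath_nodes r \<Longrightarrow> G \<subseteq> set r"
  by (auto simp: subpath_nodes_def)

lemma periodic_walk_image_between:
  assumes "2 \<le> length r"
  shows "periodic_walk r ` {i<..<j} \<in> insert {} (subpath_nodes r)"
proof (cases "Suc i < j")
  case False
  then show ?thesis by auto
next
  case True
  let ?idx = "round_trip_index (length r)"
  have "Suc i \<le> j - 1" using True by simp
  then obtain lo hi where "lo \<le> hi" and idx_image: "?idx ` {Suc i..j - 1} = {lo..hi}"
    using image_atLeastAtMost_unit_steps[of ?idx, OF round_trip_index_Suc[OF assms]] by meson
  have "hi \<in> ?idx ` {Suc i..j - 1}" using idx_image \<open>lo \<le> hi\<close> by simp
  then have "hi < length r" using round_trip_index_less[OF assms] by auto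
  have "{i<..<j} = {Suc i..j - 1}" using True by auto
  then have "periodic_walk r ` {i<..<j} = (!) r ` {lo..hi}"
    by (simp add: periodic_walk_eq_nth[OF assms] image_image flip: idx_image)
  then show ?thesis using \<open>lo \<le> hi\<close> \<open>hi < length r\<close> by (auto simp: subpath_nodes_def)
qed

definition stations_outside :: "'n set \<Rightarrow> real^'n::finite" where
  "stations_outside G = (\<chi> j. if j \<in> G then 0 else 1)"

lemma binary_vec_stations_outside: "binary_vec (stations_outside G)"
  by (simp add: binary_vec_def stations_outside_def)

lemma one_le_sum_stations_outside_iff:
  "1 \<le> (\<Sum>j\<in>S. stations_outside G $ j) \<longleftrightarrow> \<not> S \<subseteq> G"
proof
  assume "1 \<le> (\<Sum>j\<in>S. stations_outside G $ j)"
  moreover have "(\<Sum>j\<in>S. stations_outside G $ j) = 0" if "S \<subseteq> G"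
    using that by (intro sum.neutral) (auto simp: stations_outside_def)
  ultimately show "\<not> S \<subseteq> G" by auto
next
  assume "\<not> S \<subseteq> G"
  then obtain j where "j \<in> S" "j \<notin> G" by blast
  then have "stations_outside G $ j \<le> (\<Sum>j\<in>S. stations_outside G $ j)"
    by (intro member_le_sum) (auto simp: stations_outside_def)
  with \<open>j \<notin> G\<close> show "1 \<le> (\<Sum>j\<in>S. stations_outside G $ j)"
    by (simp add: stations_outside_def)
qed

lemma exists_subpath_not_rep_traversable:
  assumes "2 \<le> length r" and not_trav: "\<not> rep_traversable len d r (stations_outside S)"
  shows "\<exists>G\<in>insert {} (subpath_nodes r). G \<subseteq> S \<and> \<not> rep_traversable len d r (stations_outside G)"
proof (cases "\<exists>j\<in>set r. stations_outside S $ j = 1")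
  case False
  then have "set r \<subseteq> S" by (auto simp: stations_outside_def split: if_splits)
  moreover have "\<not> rep_traversable len d r (stations_outside (set r))"
    by (simp add: rep_traversable_def stations_outside_def)
  moreover have "set r \<in> subpath_nodes r" using assms(1) by (intro set_in_subpath_nodes) auto
  ultimately show ?thesis by blast
next
  case True
  let ?x = "stations_outside S"
  from True not_trav obtain i j where "i < j"
    and stations: "?x $ periodic_walk r i = 1" "?x $ periodic_walk r j = 1"
    and between: "\<forall>k. i < k \<and> k < j \<longrightarrow> ?x $ periodic_walk r k \<noteq> 1"
    and far: "\<not> walk_dist len r i j \<le> d"
    unfolding rep_traversable_def by blast
  define G where "G = periodic_walk r ` {i<..<j}"
  have "G \<subseteq> S" using between by (auto simp: G_def stations_outside_def split: if_splits)
  have "periodic_walk r i \<notin> G" "periodic_walk r j \<notin> G"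
    using stations \<open>G \<subseteq> S\<close> by (auto simp: stations_outside_def split: if_splits)
  then have "stations_outside G $ periodic_walk r i = 1" "stations_outside G $ periodic_walk r j = 1"
    by (simp_all add: stations_outside_def)
  moreover have "\<forall>k. i < k \<and> k < j \<longrightarrow> stations_outside G $ periodic_walk r k \<noteq> 1"
    by (simp add: stations_outside_def G_def)
  ultimately have "\<not> rep_traversable len d r (stations_outside G)"
    using \<open>i < j\<close> far unfolding rep_traversable_def by blast
  moreover have "G \<in> insert {} (subpath_nodes r)"
    unfolding G_def using assms(1) by (rule periodic_walk_image_between)
  ultimately show ?thesis using \<open>G \<subseteq> S\<close> by blast
qed

definition subpath_reducible :: "'n list \<Rightarrow> 'n set set \<Rightarrow> bool" where
  "subpath_reducible r C \<longleftrightarrow> (\<forall>S\<in>C. \<exists>G\<in>insert {} (subpath_nodes r). G \<subseteq> S \<and> (\<exists>S'\<in>C. S' \<subseteq> G))"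

lemma subpath_reducible_if_characterizes_rep_traversable:
  fixes C :: "'n::finite set set"
  assumes "2 \<le> length r"
    and char: "\<forall>x. binary_vec x \<longrightarrow> (rep_traversable len d r x \<longleftrightarrow> (\<forall>S\<in>C. (\<Sum>j\<in>S. x $ j) \<ge> 1))"
  shows "subpath_reducible r C"
  unfolding subpath_reducible_def
proof
  have trav_iff: "rep_traversable len d r (stations_outside G) \<longleftrightarrow> (\<forall>S\<in>C. \<not> S \<subseteq> G)" for G
    using char binary_vec_stations_outside[of G] by (simp add: one_le_sum_stations_outside_iff)
  fix S assume "S \<in> C"
  then have "\<not> rep_traversable len d r (stations_outside S)" by (auto simp: trav_iff)
  then obtain G where "G \<in> insert {} (subpath_nodes r)" "G \<subseteq> S"
    and "\<not> rep_traversable len d r (stations_outside G)"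
    using exists_subpath_not_rep_traversable[OF assms(1)] by blast
  then show "\<exists>G\<in>insert {} (subpath_nodes r). G \<subseteq> S \<and> (\<exists>S'\<in>C. S' \<subseteq> G)"
    unfolding trav_iff by blast
qed

lemma tight_set_concentrated_on_subpath:
  fixes v :: "real^'n::finite"
  assumes reducible: "subpath_reducible r C" and v: "v \<in> U_poly C"
    and "S \<in> C" and tight: "(\<Sum>j\<in>S. v $ j) = 1"
  shows "\<exists>G\<in>subpath_nodes r. G \<subseteq> S \<and> (\<Sum>j\<in>G. v $ j) = 1 \<and> (\<forall>j\<in>S - G. v $ j = 0)"
proof -
  have nonneg: "0 \<le> v $ j" for j using v by (simp add: U_poly_def)
  have "\<exists>G\<in>insert {} (subpath_nodes r). G \<subseteq> S \<and> (\<exists>S'\<in>C. S' \<subseteq> G)"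
    using reducible \<open>S \<in> C\<close> unfolding subpath_reducible_def by (rule bspec)
  then obtain G S' where G: "G \<in> insert {} (subpath_nodes r)" "G \<subseteq> S" and "S' \<in> C" "S' \<subseteq> G"
    by blast
  have "1 \<le> (\<Sum>j\<in>S'. v $ j)" using v \<open>S' \<in> C\<close> by (simp add: U_poly_def)
  also have "\<dots> \<le> (\<Sum>j\<in>G. v $ j)" using \<open>S' \<subseteq> G\<close> nonneg by (intro sum_mono2) auto
  finally have "1 \<le> (\<Sum>j\<in>G. v $ j)" .
  moreover have "(\<Sum>j\<in>S. v $ j) = (\<Sum>j\<in>S - G. v $ j) + (\<Sum>j\<in>G. v $ j)"
    using \<open>G \<subseteq> S\<close> by (simp add: sum.subset_diff)
  moreover have "0 \<le> (\<Sum>j\<in>S - G. v $ j)" using nonneg by (simp add: sum_nonneg)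
  ultimately have sum_G: "(\<Sum>j\<in>G. v $ j) = 1" and "(\<Sum>j\<in>S - G. v $ j) = 0"
    using tight by linarith+
  then have outside: "\<forall>j\<in>S - G. v $ j = 0" using nonneg by (simp add: sum_nonneg_eq_0_iff)
  have "G \<noteq> {}" using sum_G by (metis sum.empty zero_neq_one)
  with G(1) have "G \<in> subpath_nodes r" by simp
  then show ?thesis using \<open>G \<subseteq> S\<close> sum_G outside by (intro bexI[of _ G] conjI) simp_all
qed

lemma extreme_point_U_poly_integral_off_path:
  fixes v :: "real^'n::finite"
  assumes reducible: "subpath_reducible r C" and extreme: "v extreme_point_of U_poly C"
    and "j0 \<notin> set r"
  shows "v $ j0 \<in> \<int>"
proof (rule ccontr)
  assume nonint: "v $ j0 \<notin> \<int>"
  have v: "v \<in> U_poly C" using extreme by (simp add: extreme_point_of_def)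
  define w :: "real^'n" where "w = axis j0 1"
  have "\<forall>\<^sub>F e in at 0. v + e *\<^sub>R w \<in> U_poly C"
  proof (rule U_poly_perturbation[OF v])
    show "w $ j = 0" if "v $ j \<in> {0, 1}" for j
      using that nonint by (auto simp: w_def axis_def)
    show "(\<Sum>j\<in>S. w $ j) = 0" if S: "S \<in> C" and tight: "(\<Sum>j\<in>S. v $ j) = 1" for S
    proof -
      obtain G where "G \<in> subpath_nodes r" "G \<subseteq> S" "\<forall>j\<in>S - G. v $ j = 0"
        using tight_set_concentrated_on_subpath[OF reducible v S tight] by blast
      moreover have "j0 \<notin> G" using \<open>G \<in> subpath_nodes r\<close> \<open>j0 \<notin> set r\<close>
        by (auto dest: subpath_nodes_subset_set)
      ultimately have "j0 \<notin> S" using nonint by (metis DiffI Ints_0)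
      then show ?thesis by (auto simp: w_def axis_def intro: sum.neutral)
    qed
  qed
  moreover have "w \<noteq> 0" by (simp add: w_def)
  ultimately have "\<not> v extreme_point_of U_poly C" by (rule not_extreme_point_if_perturbable)
  then show False using extreme by contradiction
qed

lemma frac_add_eq_frac_iff: "frac (x + y) = frac x \<longleftrightarrow> y \<in> \<int>"
proof
  assume "frac (x + y) = frac x"
  then obtain n where "x + y = x + of_int n" by (rule frac_eqE)
  then show "y \<in> \<int>" by simp
qed (rule frac_add_int_right)

lemma exists_vec_along_distinct_list:
  fixes h :: "nat \<Rightarrow> real"
  assumes "distinct r"
  obtains w :: "real^'n::finite"
  where "\<And>k. k < length r \<Longrightarrow> w $ (r ! k) = h k" and "\<And>j. j \<notin> set r \<Longrightarrow> w $ j = 0"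
proof -
  define w :: "real^'n" where "w = (\<chi> j. \<Sum>k | k < length r \<and> r ! k = j. h k)"
  show ?thesis
  proof (rule that)
    show "w $ (r ! k) = h k" if "k < length r" for k
    proof -
      have "{k'. k' < length r \<and> r ! k' = r ! k} = {k}"
        using assms that by (auto simp: nth_eq_iff_index_eq)
      then show ?thesis by (simp add: w_def)
    qed
    show "w $ j = 0" if "j \<notin> set r" for j
    proof -
      have "{k. k < length r \<and> r ! k = j} = {}" using that by (auto simp: in_set_conv_nth)
      then show ?thesis unfolding w_def vec_lambda_beta by (simp only: sum.empty)
    qed
  qed
qed

lemma interval_sums_perturbation:
  fixes v :: "real^'n::finite"
  assumes "distinct r" and "k0 < length r" and nonint: "v $ (r ! k0) \<notin> \<int>"
  obtains w :: "real^'n" where "w \<noteq> 0" and "\<And>j. v $ j \<in> \<int> \<Longrightarrow> w $ j = 0"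
    and "\<And>lo hi. lo \<le> hi \<Longrightarrow> hi < length r \<Longrightarrow> (\<Sum>k=lo..hi. v $ (r ! k)) \<in> \<int> \<Longrightarrow>
           (\<Sum>k=lo..hi. w $ (r ! k)) = 0"
proof -
  \<comment> \<open>w is the discrete derivative of the indicator that the prefix sum y k has
    fractional part t, as in the proof that interval matrices are totally unimodular.\<close>
  define y where "y k = (\<Sum>i<k. v $ (r ! i))" for k
  define t where "t = frac (y (Suc k0))"
  define g where "g k = (if frac (y k) = t then 1 else 0 :: real)" for k
  obtain w :: "real^'n" where w_nth: "\<And>k. k < length r \<Longrightarrow> w $ (r ! k) = g (Suc k) - g k"
    and w_off_path: "\<And>j. j \<notin> set r \<Longrightarrow> w $ j = 0"
    using exists_vec_along_distinct_list[OF assms(1), of "\<lambda>k. g (Suc k) - g k"] by blast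
  have y_interval: "y (Suc hi) = y lo + (\<Sum>k=lo..hi. v $ (r ! k))" if "lo \<le> hi" for lo hi
    using that unfolding y_def
    by (simp add: lessThan_atLeast0 sum.atLeastLessThan_concat flip: atLeastLessThanSuc_atLeastAtMost)
  have g_interval: "g (Suc hi) = g lo" if "lo \<le> hi" and "(\<Sum>k=lo..hi. v $ (r ! k)) \<in> \<int>" for lo hi
    using that by (simp add: g_def y_interval frac_add_int_right)
  show ?thesis
  proof (rule that)
    have "frac (y (Suc k0)) \<noteq> frac (y k0)"
      using y_interval[of k0 k0] nonint by (simp add: frac_add_eq_frac_iff)
    then have "w $ (r ! k0) = 1" using assms(2) by (simp add: w_nth g_def t_def)
    then show "w \<noteq> 0" by (metis zero_index zero_neq_one)
  next
    fix j assume "v $ j \<in> \<int>"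
    show "w $ j = 0"
    proof (cases "j \<in> set r")
      case True
      then obtain k where "k < length r" "j = r ! k" by (auto simp: in_set_conv_nth)
      then show ?thesis using g_interval[of k k] \<open>v $ j \<in> \<int>\<close> by (simp add: w_nth)
    qed (rule w_off_path)
  next
    fix lo hi assume "lo \<le> hi" "hi < length r" "(\<Sum>k=lo..hi. v $ (r ! k)) \<in> \<int>"
    then have "(\<Sum>k=lo..hi. w $ (r ! k)) = (\<Sum>k=lo..hi. g (Suc k) - g k)"
      by (intro sum.cong) (auto simp: w_nth)
    also have "\<dots> = g (Suc hi) - g lo" using \<open>lo \<le> hi\<close> by (intro sum_Suc_diff) simp
    finally show "(\<Sum>k=lo..hi. w $ (r ! k)) = 0"
      using g_interval[OF \<open>lo \<le> hi\<close> \<open>(\<Sum>k=lo..hi. v $ (r ! k)) \<in> \<int>\<close>] by simp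
  qed
qed

lemma extreme_point_U_poly_integral_on_path:
  fixes v :: "real^'n::finite"
  assumes "distinct r" and reducible: "subpath_reducible r C"
    and extreme: "v extreme_point_of U_poly C" and "k0 < length r"
  shows "v $ (r ! k0) \<in> \<int>"
proof (rule ccontr)
  assume "v $ (r ! k0) \<notin> \<int>"
  then obtain w :: "real^'n" where "w \<noteq> 0" and w_int: "\<And>j. v $ j \<in> \<int> \<Longrightarrow> w $ j = 0"
    and w_intervals: "\<And>lo hi. lo \<le> hi \<Longrightarrow> hi < length r \<Longrightarrow> (\<Sum>k=lo..hi. v $ (r ! k)) \<in> \<int> \<Longrightarrow>
           (\<Sum>k=lo..hi. w $ (r ! k)) = 0"
    using interval_sums_perturbation[OF assms(1,4)] by blast
  have v: "v \<in> U_poly C" using extreme by (simp add: extreme_point_of_def)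
  have sum_subpath: "(\<Sum>j\<in>(!) r ` {lo..hi}. f j) = (\<Sum>k=lo..hi. f (r ! k))"
    if "hi < length r" for f :: "'n \<Rightarrow> real" and lo hi
    using assms(1) that by (simp add: sum.reindex inj_on_nth)
  have "\<forall>\<^sub>F e in at 0. v + e *\<^sub>R w \<in> U_poly C"
  proof (rule U_poly_perturbation[OF v])
    show "w $ j = 0" if "v $ j \<in> {0, 1}" for j using that w_int by auto
    show "(\<Sum>j\<in>S. w $ j) = 0" if S: "S \<in> C" and tight: "(\<Sum>j\<in>S. v $ j) = 1" for S
    proof -
      obtain G where "G \<in> subpath_nodes r" "G \<subseteq> S" and sum_G: "(\<Sum>j\<in>G. v $ j) = 1"
        and outside: "\<forall>j\<in>S - G. v $ j = 0"
        using tight_set_concentrated_on_subpath[OF reducible v S tight] by blast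
      then obtain lo hi where "lo \<le> hi" "hi < length r" and G: "G = (!) r ` {lo..hi}"
        by (auto simp: subpath_nodes_def)
      have "(\<Sum>j\<in>S. w $ j) = (\<Sum>j\<in>S - G. w $ j) + (\<Sum>j\<in>G. w $ j)"
        using \<open>G \<subseteq> S\<close> by (simp add: sum.subset_diff)
      also have "(\<Sum>j\<in>S - G. w $ j) = 0" using outside w_int by (simp add: sum.neutral)
      also have "(\<Sum>j\<in>G. w $ j) = 0"
        using w_intervals[OF \<open>lo \<le> hi\<close> \<open>hi < length r\<close>] sum_G sum_subpath[OF \<open>hi < length r\<close>]
        unfolding G by simp
      finally show ?thesis by simp
    qed
  qed
  then have "\<not> v extreme_point_of U_poly C" using \<open>w \<noteq> 0\<close> by (rule not_extreme_point_if_perturbable)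
  then show False using extreme by contradiction
qed

lemma integral_polytope_U_poly_if_subpath_reducible:
  fixes C :: "'n::finite set set"
  assumes "distinct r" and "subpath_reducible r C"
  shows "integral_polytope (U_poly C)"
  unfolding integral_polytope_def
proof (intro allI impI)
  fix v :: "real^'n" and j
  assume extreme: "v extreme_point_of U_poly C"
  show "v $ j \<in> \<int>"
  proof (cases "j \<in> set r")
    case True
    then obtain k where "k < length r" "j = r ! k" by (auto simp: in_set_conv_nth)
    then show ?thesis using extreme_point_U_poly_integral_on_path[OF assms extreme] by simp
  next
    case False
    then show ?thesis using extreme_point_U_poly_integral_off_path[OF assms(2) extreme] by simp
  qed
qed

lemma cover_family_singleton: "cover_family {r} D = D r"
  by (auto simp: cover_family_def)

theorem lemma3:
  fixes A :: "('n::finite) set set"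
    and len :: "'n set \<Rightarrow> real"
    and d :: real
    and Q :: "'q set"
    and R :: "'q \<Rightarrow> 'n list set"
    and D :: "'q \<Rightarrow> 'n list \<Rightarrow> 'n set set"
    and q :: 'q and r0 :: "'n list"
  assumes edges: "\<forall>e\<in>A. card e = 2"
    and len_pos: "\<forall>e\<in>A. len e > 0"
    and d_pos: "d > 0"
    and len_le: "\<forall>e\<in>A. len e \<le> d"
    and Q_fin: "finite Q"
    and R_fin: "\<forall>q\<in>Q. finite (R q) \<and> R q \<noteq> {}"
    and R_paths: "\<forall>q\<in>Q. \<forall>r\<in>R q. is_path A r"
    and D_char: "\<forall>q\<in>Q. \<forall>r\<in>R q. \<forall>x. binary_vec x \<longrightarrow>
                   (rep_traversable len d r x \<longleftrightarrow> (\<forall>S\<in>D q r. (\<Sum>j\<in>S. x $ j) \<ge> 1))"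
    and q_in: "q \<in> Q"
    and single: "R q = {r0}"
    and simple: "simple_node_path r0"
  shows "integral_polytope (U_poly (cover_family (R q) (D q)))"
proof -
  have "2 \<le> length r0" using R_paths q_in single by (simp add: is_path_def)
  moreover have "\<forall>x. binary_vec x \<longrightarrow>
      (rep_traversable len d r0 x \<longleftrightarrow> (\<forall>S\<in>D q r0. (\<Sum>j\<in>S. x $ j) \<ge> 1))"
    using D_char q_in single by simp
  ultimately have "subpath_reducible r0 (D q r0)"
    by (rule subpath_reducible_if_characterizes_rep_traversable)
  moreover have "distinct r0" using simple by (simp add: simple_node_path_def)
  ultimately show ?thesis
    unfolding single cover_family_singleton by (intro integral_polytope_U_poly_if_subpath_reducible)
qed

end
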